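(* Let $G=(V,E)$ be a directed acyclic graph with real edge weights, let $s_1,t_1,s_2,t_2\in V$, let $E_\cap=E(s_1,t_1)\cap E(s_2,t_2)$, and let $\mathcal{B}$ be the set of vertex sets of the connected components of the undirected graph obtained from $(V,E_\cap)$ by ignoring edge directions. Let $i\in\{1,2\}$, let $P$ be a shortest path from $s_i$ to $t_i$, and let $x,y\in B$ for some $B\in\mathcal{B}$ with $x$ preceding $y$ on $P$. Then the subpath $P[x,y]$ lies in the induced subgraph of $(V,E_\cap)$ on $B$, i.e. all its vertices lie in $B$ and all its edges lie in $E_\cap$.
   Context: $E(x,y)$ is the set of edges lying on at least one shortest (minimum weight) path from $x$ to $y$. For a path $P$, $x$ precedes $y$ if $x=y$ or $x$ appears before $y$; $P[x,y]$ is the subpath from $x$ to $y$. *)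

theory Defs
  imports Complex_Main
begin

definition dag :: "'a set \<Rightarrow> ('a \<times> 'a) set \<Rightarrow> bool" where
  "dag V E \<longleftrightarrow> finite V \<and> E \<subseteq> V \<times> V \<and> (\<forall>v. (v, v) \<notin> E\<^sup>+)"

definition path_edges :: "'a list \<Rightarrow> ('a \<times> 'a) list" where
  "path_edges P = zip P (tl P)"

definition is_path :: "('a \<times> 'a) set \<Rightarrow> 'a \<Rightarrow> 'a \<Rightarrow> 'a list \<Rightarrow> bool" where
  "is_path E x y P \<longleftrightarrow> P \<noteq> [] \<and> hd P = x \<and> last P = y \<and> set (path_edges P) \<subseteq> E"

definition path_weight :: "('a \<times> 'a \<Rightarrow> real) \<Rightarrow> 'a list \<Rightarrow> real" where
  "path_weight w P = sum_list (map w (path_edges P))"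

definition shortest_path ::
  "('a \<times> 'a) set \<Rightarrow> ('a \<times> 'a \<Rightarrow> real) \<Rightarrow> 'a \<Rightarrow> 'a \<Rightarrow> 'a list \<Rightarrow> bool" where
  "shortest_path E w x y P \<longleftrightarrow> is_path E x y P \<and>
     (\<forall>Q. is_path E x y Q \<longrightarrow> path_weight w P \<le> path_weight w Q)"

definition sp_edges ::
  "('a \<times> 'a) set \<Rightarrow> ('a \<times> 'a \<Rightarrow> real) \<Rightarrow> 'a \<Rightarrow> 'a \<Rightarrow> ('a \<times> 'a) set" where
  "sp_edges E w x y = {e. \<exists>P. shortest_path E w x y P \<and> e \<in> set (path_edges P)}"

definition undirected_components :: "'a set \<Rightarrow> ('a \<times> 'a) set \<Rightarrow> 'a set set" where
  "undirected_components V F = {{u \<in> V. (v, u) \<in> (F \<union> F\<inverse>)\<^sup>*} | v. v \<in> V}"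

text \<open>Subpath P[x,y] where x = P!i and y = P!j, i \<le> j.\<close>
definition subpath :: "'a list \<Rightarrow> nat \<Rightarrow> nat \<Rightarrow> 'a list" where
  "subpath P i j = drop i (take (Suc j) P)"

end

theory Submission
  imports Defs
begin

(*
  For a vertex u on a shortest a-b path, every shortest a-u path has the same weight d_a(u), and
  every prefix of a shortest a-b path is one. Along an edge of E(s1,t1) \<inter> E(s2,t2), traversed in
  either direction, d_s1 and d_s2 change by the same amount, so d_s1 - d_s2 is constant on every
  component B. If x, y \<in> B lie in this order on a shortest s1-t1 path P, then P[x,y] weighs
  d_s1(y) - d_s1(x) = d_s2(y) - d_s2(x); gluing a shortest s2-x path, P[x,y] and the y-t2 tail of
  a shortest s2-t2 path through y therefore gives a shortest s2-t2 path. So every edge of P[x,y]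
  lies in E(s1,t1) \<inter> E(s2,t2), and its vertices are joined to x inside B. Acyclicity is needed
  only to rule out x = y with i < j.
*)

lemma path_edges_Cons_Cons [simp]: "path_edges (a # b # zs) = (a, b) # path_edges (b # zs)"
  by (simp add: path_edges_def)

lemma path_edges_Nil [simp]: "path_edges [] = []"
  by (simp add: path_edges_def)

lemma path_edges_singleton [simp]: "path_edges [a] = []"
  by (simp add: path_edges_def)

lemma path_edges_append:
  assumes "xs \<noteq> []" "last xs = hd ys"
  shows "path_edges (xs @ tl ys) = path_edges xs @ path_edges ys"
  using assms
proof (induction xs rule: induct_list012)
  case (2 a)
  then show ?case by (cases ys) auto
next
  case (3 a b zs)
  then show ?case by simp
qed simp

lemma path_weight_append:
  "xs \<noteq> [] \<Longrightarrow> last xs = hd ys \<Longrightarrow>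
   path_weight w (xs @ tl ys) = path_weight w xs + path_weight w ys"
  by (simp add: path_weight_def path_edges_append)

lemma in_set_path_edgesD:
  assumes "(u, v) \<in> set (path_edges L)"
  obtains k where "Suc k < length L" "L ! k = u" "L ! Suc k = v"
proof -
  obtain k where "k < length L - 1" "L ! k = u" "L ! Suc k = v"
    using assms by (auto simp: path_edges_def set_zip nth_tl)
  then show thesis by (intro that[of k]) auto
qed

lemma path_edges_vertices: "(u, v) \<in> set (path_edges L) \<Longrightarrow> u \<in> set L \<and> v \<in> set L"
  by (cases L) (auto simp: path_edges_def dest: set_zip_leftD set_zip_rightD)

lemma take_Suc_append_tl_drop:
  assumes "k < length L"
  shows "L = take (Suc k) L @ tl (drop k L)" "take (Suc k) L \<noteq> []"
    "last (take (Suc k) L) = L ! k" "hd (drop k L) = L ! k"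
proof -
  show "L = take (Suc k) L @ tl (drop k L)"
    by (metis append_take_drop_id drop_Suc tl_drop)
  show "take (Suc k) L \<noteq> []" "last (take (Suc k) L) = L ! k" "hd (drop k L) = L ! k"
    using assms by (auto simp: take_Suc_conv_app_nth hd_drop_conv_nth)
qed

lemma path_weight_split:
  "k < length L \<Longrightarrow> path_weight w L = path_weight w (take (Suc k) L) + path_weight w (drop k L)"
  using take_Suc_append_tl_drop path_weight_append by metis

lemma path_edges_split:
  "k < length L \<Longrightarrow>
   set (path_edges L) = set (path_edges (take (Suc k) L)) \<union> set (path_edges (drop k L))"
  using take_Suc_append_tl_drop path_edges_append by (metis set_append)

lemma is_path_append:
  assumes "is_path E a b xs" "is_path E b c ys"
  shows "is_path E a c (xs @ tl ys)"
proof -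
  have "xs \<noteq> []" "ys \<noteq> []" "last xs = hd ys" using assms by (auto simp: is_path_def)
  moreover have "last (xs @ tl ys) = last ys"
    using \<open>ys \<noteq> []\<close> \<open>last xs = hd ys\<close> by (cases ys) auto
  ultimately show ?thesis using assms by (auto simp: is_path_def path_edges_append)
qed

lemma is_path_take_drop:
  assumes "is_path E a b P" "k < length P"
  shows "is_path E a (P ! k) (take (Suc k) P)" "is_path E (P ! k) b (drop k P)"
  using assms path_edges_split[OF assms(2)] take_Suc_append_tl_drop[OF assms(2)]
  by (auto simp: is_path_def hd_conv_nth)

lemma path_reachable:
  "set (path_edges L) \<subseteq> E \<Longrightarrow> u \<in> set L \<Longrightarrow> (hd L, u) \<in> E\<^sup>*"
proof (induction L rule: induct_list012)
  case (3 a b zs)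
  show ?case
  proof (cases "u = a")
    case False
    then have "(b, u) \<in> E\<^sup>*" using "3.IH"(2) "3.prems" by simp
    then show ?thesis using "3.prems"(1) by (auto intro: converse_rtrancl_into_rtrancl)
  qed simp
qed auto

lemma path_distinct_if_acyclic:
  "acyclic E \<Longrightarrow> set (path_edges L) \<subseteq> E \<Longrightarrow> distinct L"
proof (induction L rule: induct_list012)
  case (3 a b zs)
  have "a \<notin> set (b # zs)"
  proof
    assume "a \<in> set (b # zs)"
    then have "(b, a) \<in> E\<^sup>*" using path_reachable[of "b # zs" E a] "3.prems"(2) by simp
    moreover have "(a, b) \<in> E" using "3.prems"(2) by simp
    ultimately show False using \<open>acyclic E\<close> by (auto simp: acyclic_def dest: rtrancl_into_trancl2)
  qed
  then show ?case using "3.IH"(2) "3.prems" by simp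
qed auto

lemma shortest_path_take:
  assumes Q: "shortest_path E w a b Q" and k: "k < length Q"
  shows "shortest_path E w a (Q ! k) (take (Suc k) Q)"
  unfolding shortest_path_def
proof (intro conjI allI impI)
  show pre: "is_path E a (Q ! k) (take (Suc k) Q)"
    using Q k is_path_take_drop by (metis shortest_path_def)
  fix R assume R: "is_path E a (Q ! k) R"
  have suf: "is_path E (Q ! k) b (drop k Q)"
    using Q k is_path_take_drop by (metis shortest_path_def)
  have "path_weight w Q \<le> path_weight w (R @ tl (drop k Q))"
    using Q is_path_append[OF R suf] by (simp add: shortest_path_def)
  also have "\<dots> = path_weight w R + path_weight w (drop k Q)"
    using R suf by (simp add: path_weight_append is_path_def)
  finally show "path_weight w (take (Suc k) Q) \<le> path_weight w R"
    using path_weight_split[OF k] by simp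
qed

text \<open>A junk value when no shortest a-u path exists.\<close>
definition sp_dist :: "('a \<times> 'a) set \<Rightarrow> ('a \<times> 'a \<Rightarrow> real) \<Rightarrow> 'a \<Rightarrow> 'a \<Rightarrow> real" where
  "sp_dist E w a u = path_weight w (SOME Q. shortest_path E w a u Q)"

lemma sp_dist_eq: "shortest_path E w a u Q \<Longrightarrow> sp_dist E w a u = path_weight w Q"
proof -
  assume Q: "shortest_path E w a u Q"
  then have "shortest_path E w a u (SOME Q. shortest_path E w a u Q)" by (rule someI)
  then show ?thesis
    using Q by (auto simp: sp_dist_def shortest_path_def intro: order.antisym)
qed

definition on_shortest_path ::
  "('a \<times> 'a) set \<Rightarrow> ('a \<times> 'a \<Rightarrow> real) \<Rightarrow> 'a \<Rightarrow> 'a \<Rightarrow> 'a \<Rightarrow> bool" where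
  "on_shortest_path E w a b u \<longleftrightarrow> (\<exists>Q. shortest_path E w a b Q \<and> u \<in> set Q)"

lemma sp_edges_subset: "sp_edges E w a b \<subseteq> E"
  by (auto simp: sp_edges_def shortest_path_def is_path_def)

lemma sp_edges_on_shortest_path:
  "(u, v) \<in> sp_edges E w a b \<Longrightarrow> on_shortest_path E w a b u \<and> on_shortest_path E w a b v"
  by (auto simp: sp_edges_def on_shortest_path_def dest: path_edges_vertices)

lemma sp_dist_sp_edge:
  assumes "(u, v) \<in> sp_edges E w a b"
  shows "sp_dist E w a v = sp_dist E w a u + w (u, v)"
proof -
  obtain Q where Q: "shortest_path E w a b Q" "(u, v) \<in> set (path_edges Q)"
    using assms by (auto simp: sp_edges_def)
  then obtain k where k: "Suc k < length Q" "Q ! k = u" "Q ! Suc k = v"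
    by (auto elim: in_set_path_edgesD)
  have "take (Suc (Suc k)) Q = take (Suc k) Q @ tl [u, v]"
    using k by (simp add: take_Suc_conv_app_nth)
  then have "path_weight w (take (Suc (Suc k)) Q) = path_weight w (take (Suc k) Q) + w (u, v)"
    using k path_weight_append[of "take (Suc k) Q" "[u, v]" w]
    by (simp add: take_Suc_conv_app_nth path_weight_def)
  moreover have "sp_dist E w a u = path_weight w (take (Suc k) Q)"
    using shortest_path_take[OF Q(1), of k] k by (simp add: sp_dist_eq)
  moreover have "sp_dist E w a v = path_weight w (take (Suc (Suc k)) Q)"
    using shortest_path_take[OF Q(1), of "Suc k"] k by (simp add: sp_dist_eq)
  ultimately show ?thesis by simp
qed

lemma sp_dist_diff_rtrancl:
  fixes E :: "('a \<times> 'a) set" and w :: "'a \<times> 'a \<Rightarrow> real" and a b c d :: 'a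
  defines "F \<equiv> sp_edges E w a b \<inter> sp_edges E w c d"
  assumes "(x, y) \<in> (F \<union> F\<inverse>)\<^sup>*"
  shows "sp_dist E w a y - sp_dist E w c y = sp_dist E w a x - sp_dist E w c x"
  using assms(2)
proof (induction rule: rtrancl_induct)
  case (step y z)
  then show ?case by (auto simp: F_def sp_dist_sp_edge)
qed simp

lemma path_edges_subset_sp_edges:
  assumes x: "on_shortest_path E w c d x" and y: "on_shortest_path E w c d y"
    and S: "is_path E x y S" "path_weight w S = sp_dist E w c y - sp_dist E w c x"
  shows "set (path_edges S) \<subseteq> sp_edges E w c d"
proof -
  obtain Q1 k1 where Q1: "shortest_path E w c d Q1" "k1 < length Q1" "Q1 ! k1 = x"
    using x by (auto simp: on_shortest_path_def in_set_conv_nth)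
  obtain Q2 k2 where Q2: "shortest_path E w c d Q2" "k2 < length Q2" "Q2 ! k2 = y"
    using y by (auto simp: on_shortest_path_def in_set_conv_nth)
  define pre where "pre = take (Suc k1) Q1"
  define suf where "suf = drop k2 Q2"
  have pre_sp: "shortest_path E w c x pre"
    using shortest_path_take[OF Q1(1,2)] Q1(3) by (simp add: pre_def)
  then have pre_path: "is_path E c x pre" by (simp add: shortest_path_def)
  have suf_path: "is_path E y d suf"
    using is_path_take_drop Q2 by (metis shortest_path_def suf_def)
  have "shortest_path E w c y (take (Suc k2) Q2)"
    using shortest_path_take[OF Q2(1,2)] Q2(3) by simp
  then have Q2_weight: "path_weight w Q2 = sp_dist E w c y + path_weight w suf"
    using path_weight_split[OF Q2(2)] by (simp add: sp_dist_eq suf_def)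
  define preS where "preS = pre @ tl S"
  define R where "R = preS @ tl suf"
  have preS_path: "is_path E c y preS"
    using is_path_append[OF pre_path S(1)] by (simp add: preS_def)
  have R_path: "is_path E c d R"
    using is_path_append[OF preS_path suf_path] by (simp add: R_def)
  have "path_weight w R = path_weight w preS + path_weight w suf"
    using preS_path suf_path by (simp add: R_def path_weight_append is_path_def)
  also have "\<dots> = path_weight w pre + path_weight w S + path_weight w suf"
    using pre_path S(1) by (simp add: preS_def path_weight_append is_path_def)
  also have "\<dots> = path_weight w Q2"
    using S(2) Q2_weight pre_sp by (simp add: sp_dist_eq)
  finally have R_sp: "shortest_path E w c d R"
    using Q2(1) R_path by (simp add: shortest_path_def)
  have "set (path_edges S) \<subseteq> set (path_edges preS)"
    using pre_path S(1) by (auto simp: preS_def path_edges_append is_path_def)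
  moreover have "set (path_edges preS) \<subseteq> set (path_edges R)"
    using preS_path suf_path by (auto simp: R_def path_edges_append is_path_def)
  ultimately show ?thesis using R_sp by (auto simp: sp_edges_def)
qed

lemma subpath_decomp:
  assumes "i \<le> j" "j < length P"
  shows "take (Suc j) P = take (Suc i) P @ tl (subpath P i j)"
    "last (take (Suc i) P) = hd (subpath P i j)" "take (Suc i) P \<noteq> []"
  using take_Suc_append_tl_drop[of i "take (Suc j) P"] assms
  by (simp_all add: subpath_def min_absorb2)

lemma is_path_subpath:
  assumes "is_path E a b P" "i \<le> j" "j < length P"
  shows "is_path E (P ! i) (P ! j) (subpath P i j)"
  using assms is_path_take_drop(2)[OF is_path_take_drop(1)[OF assms(1,3)], of i]
  by (simp add: subpath_def)

lemma path_weight_subpath: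
  assumes "shortest_path E w a b P" "i \<le> j" "j < length P"
  shows "path_weight w (subpath P i j) = sp_dist E w a (P ! j) - sp_dist E w a (P ! i)"
proof -
  have "sp_dist E w a (P ! j) = path_weight w (take (Suc j) P)"
    using shortest_path_take[OF assms(1,3)] by (simp add: sp_dist_eq)
  also have "\<dots> = path_weight w (take (Suc i) P) + path_weight w (subpath P i j)"
    using path_weight_append[OF subpath_decomp(3,2)[OF assms(2,3)]] subpath_decomp(1)[OF assms(2,3)]
    by simp
  also have "path_weight w (take (Suc i) P) = sp_dist E w a (P ! i)"
    using shortest_path_take[OF assms(1), of i] assms(2,3) by (simp add: sp_dist_eq)
  finally show ?thesis by simp
qed

lemma path_edges_subpath_subset:
  assumes "i \<le> j" "j < length P"
  shows "set (path_edges (subpath P i j)) \<subseteq> set (path_edges P)"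
  using path_edges_split[of j P] path_edges_split[of i "take (Suc j) P"] assms
  by (auto simp: subpath_def)

lemma path_edges_subpath_subset_sp_edges_Int:
  fixes E :: "('a \<times> 'a) set" and w :: "'a \<times> 'a \<Rightarrow> real" and a b c d :: 'a
  defines "F \<equiv> sp_edges E w a b \<inter> sp_edges E w c d"
  assumes "acyclic E" and P: "shortest_path E w a b P"
    and xy: "(P ! i, P ! j) \<in> (F \<union> F\<inverse>)\<^sup>*" and ij: "i \<le> j" "j < length P"
  shows "set (path_edges (subpath P i j)) \<subseteq> F"
proof (cases "P ! i = P ! j")
  case True
  have "distinct P"
    using path_distinct_if_acyclic assms(2) P by (auto simp: shortest_path_def is_path_def)
  then have "subpath P i j = [P ! i]"
    using True ij nth_eq_iff_index_eq[of P i j]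
    by (simp add: subpath_def drop_take take_Suc_conv_app_nth)
  then show ?thesis by simp
next
  case False
  obtain x' where "(P ! i, x') \<in> F \<union> F\<inverse>" using xy False by (auto elim: converse_rtranclE)
  then have x: "on_shortest_path E w c d (P ! i)"
    by (auto simp: F_def dest: sp_edges_on_shortest_path)
  obtain y' where "(y', P ! j) \<in> F \<union> F\<inverse>" using xy False by (auto elim: rtranclE)
  then have y: "on_shortest_path E w c d (P ! j)"
    by (auto simp: F_def dest: sp_edges_on_shortest_path)
  have "path_weight w (subpath P i j) = sp_dist E w c (P ! j) - sp_dist E w c (P ! i)"
    using path_weight_subpath[OF P ij] sp_dist_diff_rtrancl[OF xy[unfolded F_def]] by simp
  then have "set (path_edges (subpath P i j)) \<subseteq> sp_edges E w c d"
    using path_edges_subset_sp_edges[OF x y] is_path_subpath P ij by (metis shortest_path_def)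
  moreover have "set (path_edges (subpath P i j)) \<subseteq> sp_edges E w a b"
    using path_edges_subpath_subset[OF ij] P by (auto simp: sp_edges_def)
  ultimately show ?thesis by (simp add: F_def)
qed

lemma undirected_components_connected:
  assumes "B \<in> undirected_components V F" "x \<in> B" "y \<in> B"
  shows "(x, y) \<in> (F \<union> F\<inverse>)\<^sup>*"
proof -
  obtain v where B: "B = {u \<in> V. (v, u) \<in> (F \<union> F\<inverse>)\<^sup>*}"
    using assms(1) by (auto simp: undirected_components_def)
  have "sym ((F \<union> F\<inverse>)\<^sup>*)" by (simp add: sym_Un_converse sym_rtrancl)
  then show ?thesis
    using assms(2,3) B by (auto dest: symD intro: rtrancl_trans)
qed

lemma undirected_components_closed:
  assumes "B \<in> undirected_components V F" "F \<subseteq> V \<times> V" "x \<in> B" "(x, u) \<in> (F \<union> F\<inverse>)\<^sup>*"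
  shows "u \<in> B"
proof -
  obtain v where B: "B = {u \<in> V. (v, u) \<in> (F \<union> F\<inverse>)\<^sup>*}"
    using assms(1) by (auto simp: undirected_components_def)
  have "u \<in> V" using assms(4,3,2) B by (cases rule: rtranclE) auto
  then show ?thesis using assms(3,4) B by (auto intro: rtrancl_trans)
qed

theorem lemma19:
  fixes V :: "'a set" and E :: "('a \<times> 'a) set" and w :: "'a \<times> 'a \<Rightarrow> real"
    and s1 t1 s2 t2 :: 'a and s t :: 'a and P :: "'a list" and B :: "'a set"
    and x y :: 'a and i j :: nat
  assumes "dag V E"
    and "s1 \<in> V" "t1 \<in> V" "s2 \<in> V" "t2 \<in> V"
    and "(s, t) = (s1, t1) \<or> (s, t) = (s2, t2)"
    and "shortest_path E w s t P"
    and "B \<in> undirected_components V (sp_edges E w s1 t1 \<inter> sp_edges E w s2 t2)"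
    and "x \<in> B" "y \<in> B"
    and "i \<le> j" "j < length P" "P ! i = x" "P ! j = y"
  shows "set (subpath P i j) \<subseteq> B \<and>
         set (path_edges (subpath P i j)) \<subseteq> sp_edges E w s1 t1 \<inter> sp_edges E w s2 t2"
proof -
  define F where "F = sp_edges E w s1 t1 \<inter> sp_edges E w s2 t2"
  have EV: "E \<subseteq> V \<times> V" and "acyclic E"
    using assms(1) by (auto simp: dag_def acyclic_def)
  have xy: "(P ! i, P ! j) \<in> (F \<union> F\<inverse>)\<^sup>*"
    using undirected_components_connected assms(8-10,13,14) by (simp add: F_def)
  obtain c d where F_st: "F = sp_edges E w s t \<inter> sp_edges E w c d"
    using assms(6) by (auto simp: F_def Int_commute)
  have edges: "set (path_edges (subpath P i j)) \<subseteq> F"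
    using path_edges_subpath_subset_sp_edges_Int[OF \<open>acyclic E\<close> assms(7) xy[unfolded F_st] assms(11,12)]
    by (simp add: F_st)
  have "hd (subpath P i j) = x"
    using assms(11-13) by (simp add: subpath_def hd_drop_conv_nth)
  then have "(x, u) \<in> (F \<union> F\<inverse>)\<^sup>*" if "u \<in> set (subpath P i j)" for u
    using path_reachable[OF edges that] rtrancl_mono[of F "F \<union> F\<inverse>"] by blast
  moreover have "F \<subseteq> V \<times> V" using sp_edges_subset[of E w s1 t1] EV by (auto simp: F_def)
  ultimately have "set (subpath P i j) \<subseteq> B"
    using undirected_components_closed[OF assms(8)[folded F_def] _ assms(9)] by blast
  then show ?thesis using edges by (simp add: F_def)
qed

end
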